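(* Let $0\le\beta_1<\beta_2\le\pi$ and let $p=P_2(\beta_1,\beta_2)$, where $P_2(\beta_1,\beta_2)=(0,1)$ if $\beta_1<\frac{\pi}{2}<\beta_2$; $P_2(\beta_1,\beta_2)=P_1(\beta_1,\beta_2)$ if $\beta_2\le\frac{\pi}{2}$; and $P_2(\beta_1,\beta_2)=(-x,y)$ where $(x,y)=P_1(\pi-\beta_2,\pi-\beta_1)$ if $\beta_1\ge\frac{\pi}{2}$. Then the segment $e$ from $(0,0)$ to $p$ satisfies $\beta_1<slope(e)<\beta_2$.
   Context: Slope of the segment from $(0,0)$ to $p\ne(0,0)$: the angle (mod $2\pi$) of the counter-clockwise rotation taking the positive $x$-axis onto the half-line from the origin through $p$. Point rule $P_1(\theta_1,\theta_2)$ for $0\le\theta_1<\theta_2\le\frac{\pi}{2}$, with $d=\lceil\frac{1}{\theta_2-\theta_1}\rceil$: (i) if $\theta_2-\theta_1>\frac{\pi}{4}$: $(1,1)$; (ii) if $\arctan(\frac12)<\theta_2-\theta_1\le\frac{\pi}{4}$: $(1,2)$ if $\theta_1\ge\frac{\pi}{4}$, $(1,1)$ if $\arctan(\frac12)\le\theta_1<\frac{\pi}{4}$, $(2,1)$ if $\theta_1<\arctan(\frac12)$; (iii) if $\theta_2-\theta_1\le\arctan(\frac12)$: $(d,\lfloor\tan(\theta_1)d+1\rfloor)$ if $\theta_2\le\frac{\pi}{4}$, $(1,1)$ if $\theta_1<\frac{\pi}{4}<\theta_2$, $(\lfloor\tan(\frac{\pi}{2}-\theta_2)d+1\rfloor,d)$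 if $\theta_1\ge\frac{\pi}{4}$. *)

theory Defs
  imports "HOL-Analysis.Analysis"
begin

definition slope :: "real \<times> real \<Rightarrow> real" where
  "slope p = (THE \<theta>. 0 \<le> \<theta> \<and> \<theta> < 2 * pi \<and>
      fst p = norm p * cos \<theta> \<and> snd p = norm p * sin \<theta>)"

definition P1 :: "real \<Rightarrow> real \<Rightarrow> real \<times> real" where
  "P1 t1 t2 = (let d = real_of_int \<lceil>1 / (t2 - t1)\<rceil> in
     if t2 - t1 > pi / 4 then (1, 1)
     else if arctan (1/2) < t2 - t1 then
       (if t1 \<ge> pi / 4 then (1, 2)
        else if arctan (1/2) \<le> t1 then (1, 1)
        else (2, 1))
     else
       (if t2 \<le> pi / 4 then (d, real_of_int \<lfloor>tan t1 * d + 1\<rfloor>)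
        else if t1 < pi / 4 then (1, 1)
        else (real_of_int \<lfloor>tan (pi / 2 - t2) * d + 1\<rfloor>, d)))"

definition P2 :: "real \<Rightarrow> real \<Rightarrow> real \<times> real" where
  "P2 b1 b2 =
     (if b1 < pi / 2 \<and> pi / 2 < b2 then (0, 1)
      else if b2 \<le> pi / 2 then P1 b1 b2
      else (let q = P1 (pi - b2) (pi - b1) in (- fst q, snd q)))"

end

theory Submission
  imports Defs
begin

text \<open>For a window wider than \<open>arctan (1/2)\<close> one of the directions \<open>arctan (1/2)\<close>, \<open>pi/4\<close>,
  \<open>arctan 2\<close> fits, because \<open>pi/4 < 2 * arctan (1/2)\<close>. For a narrow window below \<open>pi/4\<close>,
  \<open>d \<ge> 1 / (t2 - t1)\<close> forces \<open>tan t1 < y/d \<le> tan t1 + 1/d \<le> tan t1 + (t2 - t1) < tan t2\<close>,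
  the last step since \<open>tan' \<ge> 1\<close>; above \<open>pi/4\<close> the roles of the coordinates are swapped, and
  the second quadrant is reduced to the first by the reflection \<open>x \<mapsto> -x\<close>.\<close>

lemma slope_polar:
  assumes "r > 0" "0 \<le> t" "t < 2 * pi"
  shows "slope (r * cos t, r * sin t) = t"
  unfolding slope_def
proof (rule the_equality)
  have norm: "norm (r * cos t, r * sin t) = r"
    using \<open>r > 0\<close> by (simp add: norm_Pair power_mult_distrib flip: distrib_left)
  then show "0 \<le> t \<and> t < 2 * pi \<and> fst (r * cos t, r * sin t) = norm (r * cos t, r * sin t) * cos t \<and>
      snd (r * cos t, r * sin t) = norm (r * cos t, r * sin t) * sin t"
    using assms by simp
  fix s
  assume "0 \<le> s \<and> s < 2 * pi \<and> fst (r * cos t, r * sin t) = norm (r * cos t, r * sin t) * cos s \<and>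
      snd (r * cos t, r * sin t) = norm (r * cos t, r * sin t) * sin s"
  then have s: "0 \<le> s" "s < 2 * pi" "sin s = sin t \<and> cos s = cos t"
    using norm \<open>r > 0\<close> by auto
  then obtain n :: int where n: "s = t + 2 * pi * n"
    using sin_cos_eq_iff by blast
  have "pi * (-1) < pi * n" "pi * n < pi * 1"
    using s n assms by linarith+
  then have "-1 < real_of_int n" "real_of_int n < 1"
    by (simp_all only: mult_less_cancel_left_pos[OF pi_gt_zero])
  then have "n = 0"
    by linarith
  with n show "s = t" by simp
qed

lemma polar_form_arctan:
  assumes "x > 0"
  obtains r where "r > 0" "(x, y) = (r * cos (arctan (y / x)), r * sin (arctan (y / x)))"
proof
  let ?t = "arctan (y / x)"
  have cos_pos: "cos ?t > 0"
    using arctan_bounded by (intro cos_gt_zero_pi) auto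
  with assms show "x / cos ?t > 0" by simp
  have "tan ?t = y / x"
    by (rule tan_arctan)
  then have "sin ?t = y / x * cos ?t"
    using cos_pos by (simp add: tan_def field_simps)
  then show "(x, y) = (x / cos ?t * cos ?t, x / cos ?t * sin ?t)"
    using cos_pos assms by simp
qed

lemma slope_first_quadrant:
  assumes "x > 0" "y \<ge> 0"
  shows "slope (x, y) = arctan (y / x)"
proof -
  obtain r where "r > 0" and xy: "(x, y) = (r * cos (arctan (y / x)), r * sin (arctan (y / x)))"
    using polar_form_arctan \<open>x > 0\<close> by blast
  have "0 \<le> arctan (y / x)"
    using assms by (simp add: zero_le_arctan_iff)
  moreover have "arctan (y / x) < 2 * pi"
    using arctan_ubound[of "y / x"] pi_gt_zero by linarith
  ultimately show ?thesis
    by (subst xy) (rule slope_polar[OF \<open>r > 0\<close>])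
qed

lemma slope_second_quadrant:
  assumes "x > 0" "y > 0"
  shows "slope (- x, y) = pi - arctan (y / x)"
proof -
  obtain r where "r > 0" and xy: "(x, y) = (r * cos (arctan (y / x)), r * sin (arctan (y / x)))"
    using polar_form_arctan \<open>x > 0\<close> by blast
  then have "(- x, y) = (r * cos (pi - arctan (y / x)), r * sin (pi - arctan (y / x)))"
    by simp
  moreover have "0 < arctan (y / x)"
    using assms by (simp add: zero_less_arctan_iff)
  then have "0 \<le> pi - arctan (y / x)" "pi - arctan (y / x) < 2 * pi"
    using arctan_ubound[of "y / x"] pi_gt_zero by linarith+
  ultimately show ?thesis
    using slope_polar[OF \<open>r > 0\<close>] by presburger
qed

lemma slope_vertical: "slope (0, 1) = pi / 2"
  using slope_polar[of 1 "pi / 2"] by simp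

lemma diff_less_tan_diff:
  assumes "0 \<le> a" "a < b" "b < pi / 2"
  shows "b - a < tan b - tan a"
proof -
  have "DERIV tan x :> inverse ((cos x)\<^sup>2)" if "a \<le> x" "x \<le> b" for x
    using that assms by (intro DERIV_tan) (simp add: cos_gt_zero_pi less_imp_neq[symmetric])
  then obtain z where z: "a < z" "z < b" "tan b - tan a = (b - a) * inverse ((cos z)\<^sup>2)"
    using MVT2[OF \<open>a < b\<close>, of tan "\<lambda>x. inverse ((cos x)\<^sup>2)"] by blast
  have "0 < cos z" "cos z < 1"
    using z assms cos_monotone_0_pi[of 0 z] by (auto intro: cos_gt_zero_pi)
  then have "1 < inverse ((cos z)\<^sup>2)"
    by (simp add: one_less_inverse power_less_one_iff)
  with z show ?thesis by simp
qed

lemma arctan_lattice_point_between: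
  assumes "0 \<le> t1" "t1 < t2" "t2 < pi / 2"
  defines "d \<equiv> real_of_int \<lceil>1 / (t2 - t1)\<rceil>"
  defines "y \<equiv> real_of_int \<lfloor>tan t1 * d + 1\<rfloor>"
  shows "0 < d \<and> 0 < y \<and> t1 < arctan (y / d) \<and> arctan (y / d) < t2"
proof -
  have gap: "0 < t2 - t1"
    using assms by simp
  have "1 / (t2 - t1) \<le> d"
    unfolding d_def by (rule le_of_int_ceiling)
  then have "1 \<le> d * (t2 - t1)"
    by (simp add: pos_divide_le_eq[OF gap])
  then have "0 < d"
    using gap zero_less_mult_pos2[of d "t2 - t1"] by linarith
  have inv_d: "1 / d \<le> t2 - t1"
    using \<open>1 \<le> d * (t2 - t1)\<close> by (simp add: pos_divide_le_eq[OF \<open>0 < d\<close>] mult.commute)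
  have "0 \<le> tan t1"
    using assms tan_gt_zero[of t1] by (cases "t1 = 0") auto
  have y_bounds: "tan t1 * d < y" "y \<le> tan t1 * d + 1"
    unfolding y_def by linarith+
  moreover have "0 \<le> tan t1 * d"
    using \<open>0 < d\<close> \<open>0 \<le> tan t1\<close> by simp
  ultimately have "0 < y"
    by linarith
  have "tan t1 < y / d" "y / d \<le> tan t1 + 1 / d"
    using y_bounds \<open>0 < d\<close> by (simp_all add: field_simps)
  moreover have "t2 - t1 < tan t2 - tan t1"
    using assms by (intro diff_less_tan_diff)
  ultimately have "tan t1 < y / d" "y / d < tan t2"
    using inv_d by linarith+
  moreover have "arctan (tan t1) = t1" "arctan (tan t2) = t2"
    using assms by (auto intro!: arctan_tan)
  ultimately show ?thesis
    using \<open>0 < d\<close> \<open>0 < y\<close> arctan_less_iff by metis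
qed

lemma arctan_swap_div:
  assumes "x > 0" "y > 0"
  shows "arctan (x / y) = pi / 2 - arctan (y / x)"
  using arctan_inverse[of "y / x"] assms by simp

lemma arctan_half_bounds: "0 < arctan (1 / 2) \<and> arctan (1 / 2) < pi / 4 \<and> pi / 4 < 2 * arctan (1 / 2)"
proof -
  have "arctan (1 / 2) < arctan 1" "arctan 1 < arctan (4 / 3)"
    by (simp_all only: arctan_less_iff)
  moreover have "2 * arctan (1 / 2) = arctan (4 / 3)"
    using arctan_double[of "1 / 2"] by (simp add: power2_eq_square)
  ultimately show ?thesis
    by (simp add: arctan_one)
qed

lemma arctan_P1_between:
  assumes "0 \<le> t1" "t1 < t2" "t2 \<le> pi / 2"
  shows "0 < fst (P1 t1 t2) \<and> 0 < snd (P1 t1 t2) \<and>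
    t1 < arctan (snd (P1 t1 t2) / fst (P1 t1 t2)) \<and> arctan (snd (P1 t1 t2) / fst (P1 t1 t2)) < t2"
proof -
  define d where "d = real_of_int \<lceil>1 / (t2 - t1)\<rceil>"
  define x where "x = real_of_int \<lfloor>tan (pi / 2 - t2) * d + 1\<rfloor>"
  define y where "y = real_of_int \<lfloor>tan t1 * d + 1\<rfloor>"
  have narrow_low: "0 < d \<and> 0 < y \<and> t1 < arctan (y / d) \<and> arctan (y / d) < t2"
    if "t2 \<le> pi / 4"
    using arctan_lattice_point_between[of t1 t2] that assms unfolding d_def y_def by simp
  have narrow_high: "0 < x \<and> 0 < d \<and> t1 < arctan (d / x) \<and> arctan (d / x) < t2"
    if "pi / 4 \<le> t1"
  proof -
    have "pi / 2 - t1 - (pi / 2 - t2) = t2 - t1" by simp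
    then have "0 < d \<and> 0 < x \<and> pi / 2 - t2 < arctan (x / d) \<and> arctan (x / d) < pi / 2 - t1"
      using arctan_lattice_point_between[of "pi / 2 - t2" "pi / 2 - t1"] that assms
      unfolding d_def x_def by simp
    then show ?thesis
      using arctan_swap_div[of d x] by auto
  qed
  show ?thesis
    using assms arctan_half_bounds narrow_low narrow_high arctan_swap_div[of 2 1]
    unfolding P1_def Let_def d_def[symmetric] x_def[symmetric] y_def[symmetric]
    by (auto simp: arctan_one)
qed

theorem lemma9:
  fixes \<beta>1 \<beta>2 :: real
  assumes "0 \<le> \<beta>1" and "\<beta>1 < \<beta>2" and "\<beta>2 \<le> pi"
  shows "\<beta>1 < slope (P2 \<beta>1 \<beta>2) \<and> slope (P2 \<beta>1 \<beta>2) < \<beta>2"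
proof -
  consider "\<beta>1 < pi / 2" "pi / 2 < \<beta>2" | "\<beta>2 \<le> pi / 2" | "pi / 2 \<le> \<beta>1" "pi / 2 < \<beta>2"
    by linarith
  then show ?thesis
  proof cases
    case 1
    then show ?thesis by (simp add: P2_def slope_vertical)
  next
    case 2
    obtain x y where xy: "P1 \<beta>1 \<beta>2 = (x, y)" by fastforce
    with 2 show ?thesis
      using arctan_P1_between[of \<beta>1 \<beta>2] assms slope_first_quadrant[of x y] by (simp add: P2_def)
  next
    case 3
    obtain x y where xy: "P1 (pi - \<beta>2) (pi - \<beta>1) = (x, y)" by fastforce
    with 3 show ?thesis
      using arctan_P1_between[of "pi - \<beta>2" "pi - \<beta>1"] assms slope_second_quadrant[of x y]
      by (simp add: P2_def)
  qed
qed

end
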